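(* Let $n \geq 3$ be an integer, let $p(x) \in \mathcal{T}_n$, and let $r = \deg \mathrm{Min}(p,x)$ with $3 \leq r \leq n$. Let $q(x) \in \mathcal{J}(p(x))$ and let $f(x) = q(x)/\gcd(p(x),p'(x)) \in \mathbb{Z}[x]$. Write $\mathrm{Min}(p,x) = \sum_{i=0}^r b_i x^{r-i}$ and $f(x) = \sum_{i=0}^{r-1} c_i x^{r-1-i}$ with integer coefficients. Then $c_0 = b_0 = 1$, $c_1 = b_1$, and $c_2 = b_2 + n - 1$.
   Context: A nonzero real polynomial is real-rooted if all its complex roots are real. For $n\ge1$, a Seidel trace polynomial of degree $n$ is a real-rooted polynomial $p(x)=\sum_{i=0}^n a_i x^{n-i}\in\mathbb{Z}[x]$ of degree $n$ with $a_0=1$, $a_1=0$, and $a_2=-\binom{n}{2}$ if $n\ge2$; $\mathcal{T}_n$ is the set of these. For real-rooted $p,q$ with $\deg p = m$, $\deg q = m-1$, roots $\lambda_1\le\dots\le\lambda_m$ of $p$ and $\mu_1\le\dots\le\mu_{m-1}$ of $q$, we say $q$ interlaces $p$ if $\lambda_i \le \mu_i \le \lambda_{i+1}$ for all $i$. For $p\in\mathcal{T}_n$, $\mathcal{J}(p(x))$ is the set of integer polynomials $q(x)$ of degree $n-1$ with $q\in\mathcal{T}_{n-1}$ and $q$ interlacing $p$. Here $\gcd(p(x),p'(x))$ is the monic gcd and $\mathrm{Min}(p,x) := p(x)/\gcd(p(x),p'(x))$. *)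

theory Defs
  imports "HOL-Computational_Algebra.Computational_Algebra" "HOL-Computational_Algebra.Field_as_Ring"
begin

definition real_rooted :: "int poly \<Rightarrow> bool" where
  "real_rooted p \<longleftrightarrow> p \<noteq> 0 \<and>
     (\<forall>z::complex. poly (map_poly of_int p) z = 0 \<longrightarrow> z \<in> \<real>)"

text \<open>Seidel trace polynomials of degree n: coefficients a_i = coeff p (n - i).\<close>
definition seidel_trace :: "nat \<Rightarrow> int poly set" where
  "seidel_trace n = {p. n \<ge> 1 \<and> real_rooted p \<and> degree p = n \<and>
       coeff p n = 1 \<and> coeff p (n - 1) = 0 \<and>
       (n \<ge> 2 \<longrightarrow> coeff p (n - 2) = - int (n choose 2))}"

definition interlaces :: "int poly \<Rightarrow> int poly \<Rightarrow> bool" where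
  "interlaces q p \<longleftrightarrow> real_rooted p \<and> real_rooted q \<and> degree p \<ge> 1 \<and>
     degree q = degree p - 1 \<and>
     (\<exists>ls ms :: real list. sorted ls \<and> sorted ms \<and>
        length ls = degree p \<and> length ms = degree q \<and>
        map_poly of_int p = smult (of_int (lead_coeff p)) (\<Prod>l\<leftarrow>ls. [:-l, 1:]) \<and>
        map_poly of_int q = smult (of_int (lead_coeff q)) (\<Prod>m\<leftarrow>ms. [:-m, 1:]) \<and>
        (\<forall>i < length ms. ls ! i \<le> ms ! i \<and> ms ! i \<le> ls ! (i + 1)))"

definition J_set :: "int poly \<Rightarrow> int poly set" where
  "J_set p = {q. degree q = degree p - 1 \<and> q \<in> seidel_trace (degree p - 1) \<and> interlaces q p}"

text \<open>Monic gcd of p and p', computed over the rationals (gcd of a field polynomial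
  is normalized, i.e. monic).\<close>
definition gcd_pp' :: "int poly \<Rightarrow> rat poly" where
  "gcd_pp' p = gcd (map_poly of_int p) (pderiv (map_poly of_int p))"

definition Min_poly :: "int poly \<Rightarrow> rat poly" where
  "Min_poly p = map_poly of_int p div gcd_pp' p"

end

theory Submission imports Defs "Berlekamp_Zassenhaus.Factor_Bound" begin

(* Over the complex numbers the roots of q interlace those of p, so a root of p of multiplicity m
   is a root of q of multiplicity at least m - 1, which is its multiplicity in gcd(p, p').
   Hence gcd(p, p') divides q, and p = g b, q = g f with g = gcd(p, p') monic; by Gauss's lemma
   the monic rational factors b and f have integer coefficients. In the two coefficients after
   the leading one, the contribution of g cancels in the differences:
   c_1 - b_1 = a_1(q) - a_1(p) = 0 and c_2 - b_2 = a_2(q) - a_2(p) = C(n,2) - C(n-1,2) = n - 1. *)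

hide_const (open) UnivPoly.coeff Coset.order module.smult

interpretation of_real_poly_hom: map_poly_inj_idom_divide_hom "of_real :: real \<Rightarrow> complex" ..
interpretation of_rat_poly_hom: map_poly_inj_idom_divide_hom "of_rat :: rat \<Rightarrow> complex" ..

lemma count_list_le_Suc_count_list_if_interlacing:
  fixes ls ms :: "'a::linorder list"
  assumes "sorted ls" "sorted ms" "length ls = Suc (length ms)"
    and "\<forall>i<length ms. ls ! i \<le> ms ! i \<and> ms ! i \<le> ls ! (i + 1)"
  shows "count_list ls x \<le> Suc (count_list ms x)"
  using assms
proof (induction ms arbitrary: ls)
  case Nil
  then show ?case by (cases ls) auto
next
  case (Cons m ms)
  from Cons.prems(3) obtain l ls' where ls: "ls = l # ls'" by (cases ls) auto
  have interlacing: "\<forall>i<length ms. ls' ! i \<le> ms ! i \<and> ms ! i \<le> ls' ! (i + 1)"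
  proof (intro allI impI)
    fix i assume "i < length ms"
    then show "ls' ! i \<le> ms ! i \<and> ms ! i \<le> ls' ! (i + 1)"
      using Cons.prems(4)[rule_format, of "Suc i"] by (simp add: ls)
  qed
  have IH: "count_list ls' x \<le> Suc (count_list ms x)"
    using Cons.prems(1-3) by (intro Cons.IH[OF _ _ _ interlacing]) (simp_all add: ls)
  show ?case
  proof (cases "l = x \<and> m \<noteq> x")
    case True
    have "l \<le> m" "m \<le> ls' ! 0" using Cons.prems(4)[rule_format, of 0] by (simp_all add: ls)
    have "x < y" if "y \<in> set ls'" for y
    proof -
      from that obtain j where "j < length ls'" "ls' ! j = y" by (auto simp: in_set_conv_nth)
      then have "ls' ! 0 \<le> y" using Cons.prems(1) by (metis ls sorted_simps(2) sorted_nth_mono le0)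
      with True \<open>l \<le> m\<close> \<open>m \<le> ls' ! 0\<close> show ?thesis by auto
    qed
    then have "count_list ls' x = 0" by (auto simp: count_list_0_iff)
    then show ?thesis by (simp add: ls)
  next
    case False
    then show ?thesis using IH by (auto simp: ls)
  qed
qed

lemma order_prod_list_linear_factors:
  "order z (\<Prod>l\<leftarrow>xs. [:-l, 1:]) = count_list xs (z :: 'a::idom)"
proof (induction xs)
  case (Cons a xs)
  have "[:-a, 1:] \<noteq> (0 :: 'a poly)" "(\<Prod>l\<leftarrow>xs. [:-l, 1:]) \<noteq> (0 :: 'a poly)"
    unfolding prod_list_zero_iff by force+
  then have "order z ([:-a, 1:] * (\<Prod>l\<leftarrow>xs. [:-l, 1:])) =
      order z [:-a, 1:] + order z (\<Prod>l\<leftarrow>xs. [:-l, 1:])"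
    by (intro order_mult) (metis mult_eq_0_iff)
  moreover have "order z [:-a, 1:] = (if a = z then 1 else 0)" using order_linear'[of z "-a"] by auto
  ultimately show ?case using Cons.IH by auto
qed simp

lemma dvd_if_order_le:
  fixes g h :: "'a::alg_closed_field poly"
  assumes "g \<noteq> 0" and "\<And>z. order z g \<le> order z h"
  shows "g dvd h"
  using assms
proof (induction "degree g" arbitrary: g h rule: less_induct)
  case less
  show ?case
  proof (cases "degree g = 0 \<or> h = 0")
    case True
    then show ?thesis
    proof
      assume "degree g = 0"
      then have "is_unit g" using less.prems(1) by (simp add: is_unit_iff_degree)
      then show ?thesis by (rule unit_imp_dvd)
    qed simp
  next
    case False
    then obtain a where root: "poly g a = 0" using alg_closed_imp_poly_has_root by blast
    then have "[:-a, 1:] dvd g" by (simp add: poly_eq_0_iff_dvd)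
    then obtain g' where g: "g = [:-a, 1:] * g'" by (rule dvdE)
    have "order a g \<noteq> 0" using less.prems(1) root by (simp add: order_root)
    then have "poly h a = 0" using less.prems(2)[of a] by (simp add: order_root)
    then have "[:-a, 1:] dvd h" by (simp add: poly_eq_0_iff_dvd)
    then obtain h' where h: "h = [:-a, 1:] * h'" by (rule dvdE)
    have gnz: "[:-a, 1:] * g' \<noteq> 0" using less.prems(1) unfolding g .
    have hnz: "[:-a, 1:] * h' \<noteq> 0" using False unfolding h by blast
    have "g' \<noteq> 0" using gnz by (rule contrapos_nn) simp
    have orders: "order z g' \<le> order z h'" for z
      using less.prems(2)[of z] unfolding g h order_mult[OF gnz] order_mult[OF hnz] by simp
    have "degree g = degree [:-a, 1:] + degree g'"
      unfolding g by (rule degree_mult_eq) (simp_all add: \<open>g' \<noteq> 0\<close>)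
    then have "degree g' < degree g" by simp
    from less.hyps[OF this \<open>g' \<noteq> 0\<close> orders] show ?thesis
      unfolding g h by (rule mult_dvd_mono[OF dvd_refl])
  qed
qed

lemma order_le_order_minus_1_if_dvd_pderiv:
  fixes g p :: "'a::{idom,semiring_char_0} poly"
  assumes "p \<noteq> 0" "g dvd p" "g dvd pderiv p"
  shows "order z g \<le> order z p - 1"
proof (cases "poly p z = 0")
  case True
  have "pderiv p \<noteq> 0"
  proof
    assume "pderiv p = 0"
    then obtain c where "p = [:c:]" by (auto simp: pderiv_eq_0_iff elim: degree_eq_zeroE)
    with assms(1) True show False by simp
  qed
  then have "order z g \<le> order z (pderiv p)" using assms(3) by (rule dvd_imp_order_le)
  moreover have "order z p = Suc (order z (pderiv p))" using assms(1) True by (rule order_pderiv)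
  ultimately show ?thesis by simp
next
  case False
  have "order z g \<le> order z p" using assms(1,2) by (rule dvd_imp_order_le)
  with False show ?thesis by (simp add: order_0I)
qed

lemma order_le_Suc_order_if_interlaces:
  assumes "interlaces q p"
  shows "order z (map_poly of_int p :: complex poly) \<le> Suc (order z (map_poly of_int q))"
proof (cases "z \<in> \<real>")
  case True
  then obtain x where z: "z = of_real x" by (auto elim: Reals_cases)
  from assms obtain ls ms :: "real list" where
    sorted: "sorted ls" "sorted ms" and lengths: "length ls = degree p" "length ms = degree q"
    and p: "map_poly of_int p = smult (of_int (lead_coeff p)) (\<Prod>l\<leftarrow>ls. [:-l, 1:])"
    and q: "map_poly of_int q = smult (of_int (lead_coeff q)) (\<Prod>m\<leftarrow>ms. [:-m, 1:])"
    and interlacing: "\<forall>i < length ms. ls ! i \<le> ms ! i \<and> ms ! i \<le> ls ! (i + 1)"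
    unfolding interlaces_def by blast
  have "real_rooted p" "real_rooted q" "degree p \<ge> 1" "degree q = degree p - 1"
    using assms by (simp_all add: interlaces_def)
  then have "p \<noteq> 0" "q \<noteq> 0" "degree p = Suc (degree q)" by (simp_all add: real_rooted_def)
  have complex_via_real:
      "(map_poly of_int r :: complex poly) = map_poly of_real (map_poly of_int r :: real poly)"
    for r :: "int poly"
    by (simp add: map_poly_map_poly o_def)
  have "order z (map_poly of_int p :: complex poly) = count_list ls x"
    unfolding z complex_via_real of_real_poly_hom.order_hom p
    using \<open>p \<noteq> 0\<close> order_prod_list_linear_factors by (simp add: order_smult)
  moreover have "order z (map_poly of_int q :: complex poly) = count_list ms x"
    unfolding z complex_via_real of_real_poly_hom.order_hom q
    using \<open>q \<noteq> 0\<close> order_prod_list_linear_factors by (simp add: order_smult)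
  moreover have "length ls = Suc (length ms)"
    using lengths \<open>degree p = Suc (degree q)\<close> by simp
  ultimately show ?thesis
    using count_list_le_Suc_count_list_if_interlacing[OF sorted _ interlacing] by simp
next
  case False
  have "real_rooted p" using assms by (simp add: interlaces_def)
  with False have "poly (map_poly of_int p) z \<noteq> 0" by (auto simp: real_rooted_def)
  then show ?thesis by (simp add: order_0I)
qed

lemma gcd_pp'_monic: "p \<noteq> 0 \<Longrightarrow> lead_coeff (gcd_pp' p) = 1"
  by (simp add: gcd_pp'_def poly_gcd_monic)

lemma gcd_pp'_dvd_if_interlaces:
  assumes "interlaces q p"
  shows "gcd_pp' p dvd map_poly of_int q"
proof -
  let ?C = "map_poly (of_rat :: rat \<Rightarrow> complex)"
  define P :: "rat poly" where "P = map_poly of_int p"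
  have int_via_rat: "map_poly of_int r = ?C (map_poly of_int r)" for r :: "int poly"
    by (simp add: map_poly_map_poly o_def)
  have "real_rooted p" using assms by (simp add: interlaces_def)
  then have "P \<noteq> 0" by (simp add: real_rooted_def P_def)
  then have "gcd_pp' p \<noteq> 0" by (simp add: gcd_pp'_def P_def)
  have "gcd_pp' p dvd P" "gcd_pp' p dvd pderiv P" by (simp_all add: gcd_pp'_def P_def)
  then have dvd_P: "?C (gcd_pp' p) dvd ?C P" and dvd_pderiv: "?C (gcd_pp' p) dvd pderiv (?C P)"
    by (simp_all add: of_rat_poly_hom.hom_dvd flip: of_rat_hom.map_poly_pderiv)
  have "?C (gcd_pp' p) dvd ?C (map_poly of_int q)"
  proof (rule dvd_if_order_le)
    show "?C (gcd_pp' p) \<noteq> 0" using \<open>gcd_pp' p \<noteq> 0\<close> by simp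
    fix z
    have "order z (?C (gcd_pp' p)) \<le> order z (?C P) - 1"
      using \<open>P \<noteq> 0\<close> dvd_P dvd_pderiv by (intro order_le_order_minus_1_if_dvd_pderiv) simp_all
    also have "\<dots> \<le> order z (?C (map_poly of_int q))"
      using order_le_Suc_order_if_interlaces[OF assms, of z] by (simp add: P_def flip: int_via_rat)
    finally show "order z (?C (gcd_pp' p)) \<le> order z (?C (map_poly of_int q))" .
  qed
  then show ?thesis by (rule of_rat_hom.dvd_map_poly_hom_imp_dvd)
qed

lemma monic_int_poly_div_monic:
  fixes q :: "int poly" and g :: "rat poly"
  assumes "lead_coeff q = 1" "lead_coeff g = 1" "g dvd map_poly of_int q"
  defines "f \<equiv> map_poly of_int q div g"
  shows "lead_coeff f = 1" and "degree q = degree g + degree f" and "\<forall>i. coeff f i \<in> \<int>"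
proof -
  have qf: "map_poly of_int q = g * f" using assms(3) by (simp add: f_def)
  have "q \<noteq> 0" "g \<noteq> 0" using assms(1,2) by auto
  then have "f \<noteq> 0" using qf by auto
  have "lead_coeff (g * f) = 1" using assms(1) by (simp flip: qf)
  then show "lead_coeff f = 1" using assms(2) by (simp add: lead_coeff_mult)
  have "degree (g * f) = degree g + degree f" using \<open>g \<noteq> 0\<close> \<open>f \<noteq> 0\<close> by (rule degree_mult_eq)
  then show "degree q = degree g + degree f" by (simp flip: qf)
  \<comment> \<open>Gauss: f = c h with h primitive and h dividing q over the integers, so h is monic up to sign.\<close>
  obtain c h where normalized: "rat_to_normalized_int_poly f = (c, h)" by force
  note h = rat_to_normalized_int_poly[OF normalized]
  obtain s where "q = h * smult (content q) s"
    using rat_to_int_factor_explicit[OF qf[unfolded mult.commute[of g]] normalized] by blast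
  then have "lead_coeff h * lead_coeff (smult (content q) s) = 1"
    using assms(1) by (metis lead_coeff_mult)
  then have "lead_coeff h = 1 \<or> lead_coeff h = -1" using zmult_eq_1_iff by blast
  moreover have "1 = c * of_int (lead_coeff h)" using h(1) \<open>lead_coeff f = 1\<close>
    by (metis lead_coeff_smult of_int_hom.hom_lead_coeff)
  ultimately have "c = 1" using h(2) by auto
  then show "\<forall>i. coeff f i \<in> \<int>" using h(1) by (simp add: coeff_map_poly)
qed

(* coeff (reflect_poly p) k is the coefficient of x^(degree p - k), i.e. the paper's a_k. *)
lemma coeff_reflect_poly_cofactors:
  fixes g b f :: "'a::idom poly"
  assumes "lead_coeff g = 1" "lead_coeff b = 1" "lead_coeff f = 1"
    and "coeff (reflect_poly (g * b)) 1 = coeff (reflect_poly (g * f)) 1"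
  shows "coeff (reflect_poly f) 1 = coeff (reflect_poly b) 1"
    and "coeff (reflect_poly f) 2 =
      coeff (reflect_poly b) 2 + coeff (reflect_poly (g * f)) 2 - coeff (reflect_poly (g * b)) 2"
proof -
  have expand:
    "coeff (reflect_poly (g * h)) 1 = coeff (reflect_poly h) 1 + coeff (reflect_poly g) 1"
    "coeff (reflect_poly (g * h)) 2 = coeff (reflect_poly h) 2
       + coeff (reflect_poly g) 1 * coeff (reflect_poly h) 1 + coeff (reflect_poly g) 2"
    if "lead_coeff h = 1" for h
    using assms(1) that by (simp_all add: reflect_poly_mult coeff_mult numeral_2_eq_2)
  show first: "coeff (reflect_poly f) 1 = coeff (reflect_poly b) 1"
    using assms(4) expand(1)[OF assms(2)] expand(1)[OF assms(3)] by simp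
  show "coeff (reflect_poly f) 2 =
      coeff (reflect_poly b) 2 + coeff (reflect_poly (g * f)) 2 - coeff (reflect_poly (g * b)) 2"
    using first expand(2)[OF assms(2)] expand(2)[OF assms(3)] by simp
qed

lemma seidel_trace_coeff_reflect_poly:
  assumes "p \<in> seidel_trace n" "2 \<le> n"
  shows "coeff (reflect_poly (map_poly of_int p :: 'a::{idom,ring_char_0} poly)) 1 = 0"
    and "coeff (reflect_poly (map_poly of_int p :: 'a poly)) 2 = - of_nat (n choose 2)"
  using assms by (auto simp: seidel_trace_def coeff_reflect_poly)

theorem lemma4p3:
  fixes n r :: nat and p q :: "int poly"
  assumes "n \<ge> 3"
    and "p \<in> seidel_trace n"
    and "r = degree (Min_poly p)"
    and "3 \<le> r" and "r \<le> n"
    and "q \<in> J_set p"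
  shows "gcd_pp' p dvd map_poly of_int q \<and>
    (let f = map_poly of_int q div gcd_pp' p; b = Min_poly p in
       degree f = r - 1 \<and> (\<forall>i. coeff f i \<in> \<int>) \<and> (\<forall>i. coeff b i \<in> \<int>) \<and>
       coeff f (r - 1) = 1 \<and> coeff b r = 1 \<and>
       coeff f (r - 2) = coeff b (r - 1) \<and>
       coeff f (r - 3) = coeff b (r - 2) + of_nat n - 1)"
proof -
  define G where "G = gcd_pp' p"
  define b where "b = map_poly of_int p div G"
  define f where "f = map_poly of_int q div G"
  have p: "degree p = n" "lead_coeff p = 1" "p \<noteq> 0" using assms(1,2) by (auto simp: seidel_trace_def)
  have q: "q \<in> seidel_trace (n - 1)" "interlaces q p" "degree q = n - 1" "lead_coeff q = 1"
    using assms(6) by (simp_all add: J_set_def p seidel_trace_def)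
  have G: "lead_coeff G = 1" "G dvd map_poly of_int p" "G dvd map_poly of_int q"
    using gcd_pp'_monic[OF p(3)] gcd_pp'_dvd_if_interlaces[OF q(2)] by (simp_all add: G_def gcd_pp'_def)
  note b = monic_int_poly_div_monic[OF p(2) G(1,2), folded b_def]
  note f = monic_int_poly_div_monic[OF q(4) G(1,3), folded f_def]
  have "Min_poly p = b" by (simp add: Min_poly_def b_def G_def)
  have degrees: "degree b = r" "degree f = r - 1"
    using assms(3) b(2) f(2) p q \<open>Min_poly p = b\<close> by simp_all
  have "map_poly of_int p = G * b" "map_poly of_int q = G * f" using G by (simp_all add: b_def f_def)
  moreover have "2 \<le> n" "2 \<le> n - 1" using assms(1) by simp_all
  ultimately have "coeff (reflect_poly (G * b)) 1 = 0" "coeff (reflect_poly (G * f)) 1 = 0"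
    "coeff (reflect_poly (G * b)) 2 = - of_nat (n choose 2)"
    "coeff (reflect_poly (G * f)) 2 = - of_nat ((n - 1) choose 2)"
    using seidel_trace_coeff_reflect_poly[OF assms(2), where 'a = rat]
      seidel_trace_coeff_reflect_poly[OF q(1), where 'a = rat] by auto
  moreover have "(of_nat (n choose 2) :: rat) = of_nat ((n - 1) choose 2) + of_nat n - 1"
    using assms(1) by (cases n) (simp_all add: numeral_2_eq_2 of_nat_diff)
  ultimately have "coeff (reflect_poly f) 1 = coeff (reflect_poly b) 1"
    "coeff (reflect_poly f) 2 = coeff (reflect_poly b) 2 + of_nat n - 1"
    using coeff_reflect_poly_cofactors[OF G(1) b(1) f(1)] by simp_all
  moreover have "coeff (reflect_poly b) 1 = coeff b (r - 1)" "coeff (reflect_poly b) 2 = coeff b (r - 2)"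
    "coeff (reflect_poly f) 1 = coeff f (r - 2)" "coeff (reflect_poly f) 2 = coeff f (r - 3)"
    using degrees assms(4) by (simp_all add: coeff_reflect_poly numeral_2_eq_2 numeral_3_eq_3)
  ultimately show ?thesis
    unfolding Let_def G_def[symmetric] f_def[symmetric] \<open>Min_poly p = b\<close>
    using G(3) degrees b(1,3) f(1,3) by simp
qed

end
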